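(* Let $M=M(S^2;\frac{q_1}{p_1},\frac{q_2}{p_2},\frac{q_3}{p_3})$ with $e(M)\neq0$. (a) The number of abelian $\mathrm{SL}_2(\mathbb{C})$-characters of $M$ is $\frac12\big(|H_1(M,\mathbb{Z})|+|H_1(M,\mathbb{Z}/2\mathbb{Z})|\big)$. (b) $|H_1(M,\mathbb{Z})|=|p_1p_2q_3+p_1q_2p_3+q_1p_2p_3|=p_1p_2p_3|e(M)|$, and $|H_1(M,\mathbb{Z}/2\mathbb{Z})|$ equals $4$ if $2$ divides each of $p_1,p_2,p_3$; equals $2$ if $2$ divides $p_1p_2p_3|e(M)|$ but not all of $p_1,p_2,p_3$ are even; and equals $1$ otherwise.
   Context: $M(S^2;\frac{q_1}{p_1},\frac{q_2}{p_2},\frac{q_3}{p_3})$ (with $(p_i,q_i)$ coprime, $p_i\ge1$) is the closed Seifert manifold obtained from $S_{0,3}\times S^1$ by gluing solid tori $V_i$ along the boundary tori $c_i\times S^1$ so that the meridian of $V_i$ is $p_ic_i+q_ih_i$ in homology ($c_i$ the boundary circles of the three-holed sphere $S_{0,3}$, $h_i$ an $S^1$-fiber on $c_i\times S^1$); $e(M)=\sum_i q_i/p_i$. Its fundamental group is $\langle c_1,c_2,c_3,h\mid [c_i,h]=1=c_i^{p_i}h^{q_i}\ (i=1,2,3),\ c_1c_2c_3=1\rangle$. An $\mathrm{SL}_2(\mathbb{C})$-character of $M$ is abelian if it is the trace of a diagonal representation $\pi_1(M)\to\mathrm{SL}_2(\mathbb{C})$. *)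

theory Defs
  imports Complex_Main
begin

text \<open>Generators of pi_1(M): c1, c2, c3, h.  A word in the free group on them
  is a list of letters (g, inv), where inv = True means the letter g^-1.\<close>

datatype gen = C1 | C2 | C3 | H

type_synonym word = "(gen \<times> bool) list"

definition gpow :: "gen \<Rightarrow> int \<Rightarrow> word" where
  "gpow g k = replicate (nat \<bar>k\<bar>) (g, k < 0)"

definition commw :: "gen \<Rightarrow> gen \<Rightarrow> word" where
  "commw a b = [(a, False), (b, False), (a, True), (b, True)]"

definition seif_rels :: "int \<Rightarrow> int \<Rightarrow> int \<Rightarrow> int \<Rightarrow> int \<Rightarrow> int \<Rightarrow> word list" where
  "seif_rels p1 q1 p2 q2 p3 q3 =
     [commw C1 H, commw C2 H, commw C3 H,
      gpow C1 p1 @ gpow H q1, gpow C2 p2 @ gpow H q2, gpow C3 p3 @ gpow H q3,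
      [(C1, False), (C2, False), (C3, False)]]"

text \<open>Value of a word under an assignment of generators to nonzero complex
  numbers (a diagonal entry of the image matrices).\<close>
definition word_val :: "(gen \<Rightarrow> complex) \<Rightarrow> word \<Rightarrow> complex" where
  "word_val f w = prod_list (map (\<lambda>l. if snd l then inverse (f (fst l)) else f (fst l)) w)"

text \<open>A diagonal representation pi_1 -> SL_2(C): each generator g goes to
  diag(a g, d g) with determinant a g * d g = 1, and every relator goes to the
  identity matrix (products and inverses of diagonal matrices are computed
  entrywise).\<close>
definition diag_rep :: "word list \<Rightarrow> (gen \<Rightarrow> complex) \<Rightarrow> (gen \<Rightarrow> complex) \<Rightarrow> bool" where
  "diag_rep rels a d \<longleftrightarrow> (\<forall>g. a g * d g = 1) \<and>
     (\<forall>r \<in> set rels. word_val a r = 1 \<and> word_val d r = 1)"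

text \<open>Abelian characters: traces of diagonal representations, viewed as
  functions on words (equivalently on group elements, since words surject).\<close>
definition abelian_chars :: "word list \<Rightarrow> (word \<Rightarrow> complex) set" where
  "abelian_chars rels =
     {(\<lambda>w. word_val a w + word_val d w) | a d. diag_rep rels a d}"

definition ab_vec :: "word \<Rightarrow> gen \<Rightarrow> int" where
  "ab_vec w g = (\<Sum>l\<leftarrow>w. if fst l = g then (if snd l then -1 else 1) else 0)"

definition rel_lattice :: "nat \<Rightarrow> word list \<Rightarrow> (gen \<Rightarrow> int) set" where
  "rel_lattice n rels =
     {v. \<exists>(c::nat \<Rightarrow> int) (u::gen \<Rightarrow> int).
           v = (\<lambda>g. (\<Sum>i<length rels. c i * ab_vec (rels ! i) g) + int n * u g)}"

text \<open>Order of H_1(M; Z/nZ) = pi_1(M)^ab \<otimes> Z/nZ  (n = 0 gives Z coefficients):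
  the cardinality of Z^4 modulo rel_lattice n rels.\<close>
definition H1_card :: "nat \<Rightarrow> word list \<Rightarrow> nat" where
  "H1_card n rels = card ((UNIV :: (gen \<Rightarrow> int) set) //
                          {(v, w). v - w \<in> rel_lattice n rels})"

end

theory Submission
  imports Defs "HOL-Library.Product_Plus"
begin

(* An abelian character is the trace of diag(a, a^-1) for a homomorphism a from pi_1(M) to C^*,
   and a, a^-1 are the only homomorphisms with the same trace.  Hence the number of characters is
   (|X| + |X_2|) / 2, where X is the group of homomorphisms from H_1(M) to C^* and X_2 consists
   of its elements of order at most 2.
   Solving c1^p1 h^q1 = 1 with a Bezout identity a1 p1 + b1 q1 = 1 and eliminating c3 = (c1 c2)^-1
   reduces both H_1(M) and X to the integer matrix with rows (p1 q2, p2) and (p1 q3 + p3 q1, -p3),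
   of determinant -(p1 p2 q3 + p1 q2 p3 + q1 p2 p3) = -p1 p2 p3 e(M).  A Hermite normal form of this
   matrix gives |H_1(M)| = |X| = |det|, and its reduction mod 2 gives |H_1(M; Z/2)| = |X_2|. *)

lemma eq_if_dvd_diff_bounded:
  fixes a b g :: int
  assumes "g dvd a - b" and "0 \<le> a" "a < g" and "0 \<le> b" "b < g"
  shows "a = b"
  using dvd_imp_le_int[of "a - b" g] assms by fastforce

definition coset_rel :: "'a::ab_group_add set \<Rightarrow> ('a \<times> 'a) set" where
  "coset_rel L = {(s, t). s - t \<in> L}"

lemma equiv_coset_rel:
  assumes "0 \<in> L" and "\<And>u v. u \<in> L \<Longrightarrow> v \<in> L \<Longrightarrow> u - v \<in> L"
  shows "equiv UNIV (coset_rel L)"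
proof (rule equivI)
  show "refl (coset_rel L)"
    using assms(1) by (simp add: refl_on_def coset_rel_def)
  show "sym (coset_rel L)"
  proof (rule symI)
    fix s t assume "(s, t) \<in> coset_rel L"
    then have "0 - (s - t) \<in> L"
      by (intro assms(2)[OF assms(1)]) (simp add: coset_rel_def)
    then show "(t, s) \<in> coset_rel L"
      by (simp add: coset_rel_def)
  qed
  show "trans (coset_rel L)"
  proof (rule transI)
    fix s t u assume "(s, t) \<in> coset_rel L" "(t, u) \<in> coset_rel L"
    then have "s - t \<in> L" "t - u \<in> L"
      by (simp_all add: coset_rel_def)
    then have "s - t - (0 - (t - u)) \<in> L"
      using assms by blast
    then show "(s, u) \<in> coset_rel L"
      by (simp add: coset_rel_def algebra_simps)
  qed
qed simp

lemma card_quotient_eq_card_reps: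
  assumes "equiv UNIV R" and reps: "\<And>v. \<exists>!s. s \<in> S \<and> (v, s) \<in> R"
  shows "card (UNIV // R) = card S"
proof -
  have "bij_betw (\<lambda>s. R``{s}) S (UNIV // R)"
  proof (rule bij_betw_imageI)
    show "inj_on (\<lambda>s. R``{s}) S"
    proof (rule inj_onI)
      fix s s' assume "s \<in> S" "s' \<in> S" "R``{s} = R``{s'}"
      then have "(s, s') \<in> R" "(s, s) \<in> R"
        using assms(1) by (auto simp: equiv_class_eq_iff)
      then show "s = s'"
        using reps[of s] \<open>s \<in> S\<close> \<open>s' \<in> S\<close> by blast
    qed
    show "(\<lambda>s. R``{s}) ` S = UNIV // R"
    proof
      show "UNIV // R \<subseteq> (\<lambda>s. R``{s}) ` S"
      proof
        fix X assume "X \<in> UNIV // R"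
        then obtain v where "X = R``{v}" by (auto elim: quotientE)
        moreover obtain s where "s \<in> S" "(v, s) \<in> R" using reps[of v] by blast
        ultimately show "X \<in> (\<lambda>s. R``{s}) ` S"
          using assms(1) by (auto simp: equiv_class_eq)
      qed
    qed (auto intro: quotientI)
  qed
  then show ?thesis by (simp add: bij_betw_same_card)
qed

lemma card_quotient_inv_image:
  assumes "surj F"
  shows "card (UNIV // inv_image Q F) = card (UNIV // Q)"
proof -
  have "UNIV // inv_image Q F = (\<lambda>b. F -` (Q `` {b})) ` range F"
    by (auto simp: quotient_def)
  also have "\<dots> = vimage F ` (UNIV // Q)"
    using assms by (auto simp: quotient_def)
  finally have "UNIV // inv_image Q F = vimage F ` (UNIV // Q)" .
  moreover have "inj (vimage F)"
    using assms by (metis injI surj_image_vimage_eq)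
  ultimately show ?thesis
    by (simp add: card_image inj_on_subset)
qed

definition lattice2 :: "int \<Rightarrow> int \<Rightarrow> int \<Rightarrow> int \<Rightarrow> int \<Rightarrow> (int \<times> int) set" where
  "lattice2 n a b c d = {(i * a + j * c + n * k, i * b + j * d + n * l) | i j k l. True}"

lemma mem_lattice2:
  "(x, y) \<in> lattice2 n a b c d \<longleftrightarrow> (\<exists>i j k l. x = i * a + j * c + n * k \<and> y = i * b + j * d + n * l)"
  by (auto simp: lattice2_def)

lemma lattice2_memI:
  "x = i * a + j * c + n * k \<Longrightarrow> y = i * b + j * d + n * l \<Longrightarrow> (x, y) \<in> lattice2 n a b c d"
  by (auto simp: mem_lattice2)

lemma lattice2_generators [simp]:
  "(a, b) \<in> lattice2 n a b c d" "(c, d) \<in> lattice2 n a b c d"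
  "(n, 0) \<in> lattice2 n a b c d" "(0, n) \<in> lattice2 n a b c d" "(0, 0) \<in> lattice2 n a b c d"
proof -
  show "(a, b) \<in> lattice2 n a b c d" by (rule lattice2_memI[where i=1 and j=0 and k=0 and l=0]) simp_all
  show "(c, d) \<in> lattice2 n a b c d" by (rule lattice2_memI[where i=0 and j=1 and k=0 and l=0]) simp_all
  show "(n, 0) \<in> lattice2 n a b c d" by (rule lattice2_memI[where i=0 and j=0 and k=1 and l=0]) simp_all
  show "(0, n) \<in> lattice2 n a b c d" by (rule lattice2_memI[where i=0 and j=0 and k=0 and l=1]) simp_all
  show "(0, 0) \<in> lattice2 n a b c d" by (rule lattice2_memI[where i=0 and j=0 and k=0 and l=0]) simp_all
qed

lemma lattice2_comb:
  assumes "(x, y) \<in> lattice2 n a b c d" "(x', y') \<in> lattice2 n a b c d"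
  shows "(k * x + l * x', k * y + l * y') \<in> lattice2 n a b c d"
proof -
  obtain i j s t where "x = i * a + j * c + n * s" "y = i * b + j * d + n * t"
    using assms(1) by (auto simp: mem_lattice2)
  moreover obtain i' j' s' t' where "x' = i' * a + j' * c + n * s'" "y' = i' * b + j' * d + n * t'"
    using assms(2) by (auto simp: mem_lattice2)
  ultimately show ?thesis
    by (intro lattice2_memI[where i="k * i + l * i'" and j="k * j + l * j'" and k="k * s + l * s'"
          and l="k * t + l * t'"]) (simp_all add: algebra_simps)
qed

lemma lattice2_diff:
  assumes "u \<in> lattice2 n a b c d" "v \<in> lattice2 n a b c d"
  shows "u - v \<in> lattice2 n a b c d"
  using assms lattice2_comb[of "fst u" "snd u" n a b c d "fst v" "snd v" 1 "-1"] by (cases u, cases v) simp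

lemma equiv_coset_rel_lattice2: "equiv UNIV (coset_rel (lattice2 n a b c d))"
  by (rule equiv_coset_rel) (auto simp: zero_prod_def intro: lattice2_diff)

lemma lattice2_subset:
  assumes "(a, b) \<in> lattice2 n' a' b' c' d'" "(c, d) \<in> lattice2 n' a' b' c' d'"
    and "(n, 0) \<in> lattice2 n' a' b' c' d'" "(0, n) \<in> lattice2 n' a' b' c' d'"
  shows "lattice2 n a b c d \<subseteq> lattice2 n' a' b' c' d'"
proof
  fix z assume "z \<in> lattice2 n a b c d"
  then obtain i j k l where z: "z = (i * a + j * c + n * k, i * b + j * d + n * l)"
    by (auto simp: lattice2_def)
  have "(i * a + j * c, i * b + j * d) \<in> lattice2 n' a' b' c' d'"
    using lattice2_comb[OF assms(1,2)] .
  from lattice2_comb[OF this assms(3), of 1 k] have "(i * a + j * c + k * n, i * b + j * d) \<in> lattice2 n' a' b' c' d'"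
    by simp
  from lattice2_comb[OF this assms(4), of 1 l] show "z \<in> lattice2 n' a' b' c' d'"
    by (simp add: z mult.commute)
qed

lemma lattice2_swap: "lattice2 n a b c d = lattice2 n c d a b"
  by (intro equalityI lattice2_subset) simp_all

lemma mem_lattice2_triangular:
  "(x, y) \<in> lattice2 0 g y0 0 m \<longleftrightarrow> (\<exists>i j. x = i * g \<and> y = i * y0 + j * m)"
  by (simp add: mem_lattice2)

lemma ex1_rep_triangular:
  assumes "g > 0" "m > 0"
  shows "\<exists>!s. s \<in> {0..<g} \<times> {0..<m} \<and> v - s \<in> lattice2 0 g y0 0 m"
proof -
  obtain x y where v: "v = (x, y)" by fastforce
  define i where "i = x div g"
  define r where "r = (x mod g, (y - i * y0) mod m)"
  have "v - r \<in> lattice2 0 g y0 0 m"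
    unfolding v r_def diff_Pair mem_lattice2_triangular
    by (intro exI[of _ i] exI[of _ "(y - i * y0) div m"])
      (simp add: i_def minus_mod_eq_mult_div algebra_simps)
  moreover have r: "r \<in> {0..<g} \<times> {0..<m}"
    using assms by (simp add: r_def)
  moreover have "s = r" if s: "s \<in> {0..<g} \<times> {0..<m}" "v - s \<in> lattice2 0 g y0 0 m" for s
  proof -
    have "(v - r) - (v - s) \<in> lattice2 0 g y0 0 m"
      using lattice2_diff s(2) \<open>v - r \<in> _\<close> by blast
    then obtain i j where ij: "fst s - fst r = i * g" "snd s - snd r = i * y0 + j * m"
      by (cases s, cases r) (auto simp: mem_lattice2_triangular)
    then have "fst s = fst r"
      using s(1) r by (intro eq_if_dvd_diff_bounded[of g]) auto
    then have "snd s = snd r"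
      using ij s(1) r assms(1) by (intro eq_if_dvd_diff_bounded[of m]) auto
    then show ?thesis using \<open>fst s = fst r\<close> by (simp add: prod_eq_iff)
  qed
  ultimately show ?thesis by blast
qed

lemma card_quotient_triangular:
  assumes "g > 0" "m > 0"
  shows "card (UNIV // coset_rel (lattice2 0 g y0 0 m)) = nat (g * m)"
proof -
  have "card (UNIV // coset_rel (lattice2 0 g y0 0 m)) = card ({0..<g} \<times> {0..<m})"
    by (rule card_quotient_eq_card_reps[OF equiv_coset_rel_lattice2])
      (use ex1_rep_triangular[OF assms] in \<open>simp add: coset_rel_def\<close>)
  then show ?thesis
    using assms by (simp add: card_cartesian_product nat_mult_distrib)
qed

lemma coprime_bezout_int:
  fixes p q :: int
  assumes "coprime p q"
  obtains a b where "a * p + b * q = 1"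
  using assms bezout_int[of p q] by (auto simp: coprime_iff_gcd_eq_1)

lemma lattice2_hermite:
  assumes "a * d - b * c \<noteq> 0"
  obtains g y0 m where "g > 0" "m > 0" "g * m = \<bar>a * d - b * c\<bar>"
    "lattice2 0 a b c d = lattice2 0 g y0 0 m"
proof -
  (* The first coordinates of the lattice are the multiples of g = gcd a c, and the lattice meets
     the second axis in the multiples of |det| / g. *)
  define g where "g = gcd a c"
  have "g \<noteq> 0"
    using assms by (auto simp: g_def)
  then have g: "g > 0"
    by (simp add: g_def)
  obtain a' c' where ac: "a = a' * g" "c = c' * g" and "coprime a' c'"
    using gcd_coprime_exists[of a c] \<open>g \<noteq> 0\<close> unfolding g_def by blast
  obtain u v where uv': "u * a' + v * c' = 1"
    using coprime_bezout_int[OF \<open>coprime a' c'\<close>] .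
  have "u * a + v * c = (u * a' + v * c') * g"
    by (simp add: ac algebra_simps)
  then have uv: "u * a + v * c = g"
    by (simp add: uv')
  define D where "D = a' * d - c' * b"
  have det: "a * d - b * c = g * D"
    by (simp add: D_def ac algebra_simps)
  define y0 where "y0 = u * b + v * d"
  have "a' * y0 - v * D = b * (u * a' + v * c')" "c' * y0 + u * D = d * (u * a' + v * c')"
    by (simp_all add: y0_def D_def algebra_simps)
  then have bd: "b = a' * y0 - v * D" "d = c' * y0 + u * D"
    by (simp_all add: uv')
  have "lattice2 0 a b c d = lattice2 0 g y0 0 \<bar>D\<bar>"
  proof (intro equalityI lattice2_subset)
    show "(a, b) \<in> lattice2 0 g y0 0 \<bar>D\<bar>"
      by (rule lattice2_memI[where i=a' and j="- v * sgn D" and k=0 and l=0])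
        (simp_all add: ac bd(1) mult.assoc mult_sgn_abs)
    show "(c, d) \<in> lattice2 0 g y0 0 \<bar>D\<bar>"
      by (rule lattice2_memI[where i=c' and j="u * sgn D" and k=0 and l=0])
        (simp_all add: ac bd(2) mult.assoc mult_sgn_abs)
    show "(g, y0) \<in> lattice2 0 a b c d"
      by (rule lattice2_memI[where i=u and j=v and k=0 and l=0]) (simp_all add: uv y0_def)
    show "(0, \<bar>D\<bar>) \<in> lattice2 0 a b c d"
      by (rule lattice2_memI[where i="- c' * sgn D" and j="a' * sgn D" and k=0 and l=0])
        (simp_all add: ac, simp add: D_def abs_if sgn_if algebra_simps)
  qed simp_all
  moreover have "g * \<bar>D\<bar> = \<bar>a * d - b * c\<bar>"
    using g by (simp add: det abs_mult)
  ultimately show ?thesis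
    using that[of g "\<bar>D\<bar>" y0] g assms det by simp
qed

lemma card_quotient_lattice2:
  assumes "a * d - b * c \<noteq> 0"
  shows "card (UNIV // coset_rel (lattice2 0 a b c d)) = nat \<bar>a * d - b * c\<bar>"
proof -
  obtain g y0 m where "g > 0" "m > 0" "g * m = \<bar>a * d - b * c\<bar>"
    "lattice2 0 a b c d = lattice2 0 g y0 0 m"
    using lattice2_hermite[OF assms] .
  then show ?thesis
    using card_quotient_triangular by metis
qed

(* 4 / 2^r, where r is the rank of the matrix with rows (a, b) and (c, d) over Z/2 *)
definition index_mod2 :: "int \<Rightarrow> int \<Rightarrow> int \<Rightarrow> int \<Rightarrow> nat" where
  "index_mod2 a b c d =
     (if even a \<and> even b \<and> even c \<and> even d then 4 else if even (a * d - b * c) then 2 else 1)"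

lemma lattice2_mod2_all_even:
  assumes "even a" "even b" "even c" "even d"
  shows "lattice2 2 a b c d = lattice2 0 2 0 0 2"
proof (intro equalityI lattice2_subset)
  show "(a, b) \<in> lattice2 0 2 0 0 2" "(c, d) \<in> lattice2 0 2 0 0 2"
    using assms by (auto simp: mem_lattice2 elim!: evenE)
qed simp_all

lemma lattice2_mod2_det_odd:
  assumes "odd (a * d - b * c)"
  shows "lattice2 2 a b c d = lattice2 0 1 0 0 1"
proof (intro equalityI lattice2_subset)
  obtain K where K: "a * d - b * c = 2 * K + 1"
    using assms by (metis oddE)
  show "(1, 0) \<in> lattice2 2 a b c d"
    by (rule lattice2_memI[where i=d and j="- b" and k="- K" and l=0]) (use K in \<open>simp_all add: algebra_simps\<close>)
  show "(0, 1) \<in> lattice2 2 a b c d"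
    by (rule lattice2_memI[where i="- c" and j=a and k=0 and l="- K"]) (use K in \<open>simp_all add: algebra_simps\<close>)
  have "(x, y) \<in> lattice2 0 1 0 0 1" for x y
    by (simp add: mem_lattice2)
  then show "(a, b) \<in> lattice2 0 1 0 0 1" "(c, d) \<in> lattice2 0 1 0 0 1"
    "(2, 0) \<in> lattice2 0 1 0 0 1" "(0, 2) \<in> lattice2 0 1 0 0 1" by blast+
qed simp_all

lemma lattice2_mod2_a_odd:
  assumes "odd a" "even (a * d - b * c)"
  shows "lattice2 2 a b c d = lattice2 0 1 b 0 2"
proof (intro equalityI lattice2_subset)
  obtain K where K: "a = 2 * K + 1"
    using assms(1) by (metis oddE)
  obtain E where E: "a * d - b * c = 2 * E"
    using assms(2) by (metis evenE)
  show "(a, b) \<in> lattice2 0 1 b 0 2"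
    by (rule lattice2_memI[where i=a and j="- K * b" and k=0 and l=0]) (simp_all add: K algebra_simps)
  show "(c, d) \<in> lattice2 0 1 b 0 2"
    by (rule lattice2_memI[where i=c and j="E - K * d" and k=0 and l=0])
      (use E in \<open>simp_all add: K algebra_simps\<close>)
  show "(2, 0) \<in> lattice2 0 1 b 0 2"
    by (rule lattice2_memI[where i=2 and j="- b" and k=0 and l=0]) simp_all
  show "(0, 2) \<in> lattice2 0 1 b 0 2"
    by (rule lattice2_memI[where i=0 and j=1 and k=0 and l=0]) simp_all
  show "(1, b) \<in> lattice2 2 a b c d"
    by (rule lattice2_memI[where i=1 and j=0 and k="- K" and l=0]) (simp_all add: K)
qed simp_all

lemma lattice2_mod2_b_odd:
  assumes "even a" "odd b" "even c"
  shows "lattice2 2 a b c d = lattice2 0 2 0 0 1"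
proof (intro equalityI lattice2_subset)
  obtain A B where AB: "a = 2 * A" "b = 2 * B + 1"
    using assms(1,2) by (metis evenE oddE)
  show "(a, b) \<in> lattice2 0 2 0 0 1" "(c, d) \<in> lattice2 0 2 0 0 1"
    using assms(1,3) by (auto simp: mem_lattice2 elim!: evenE)
  show "(2, 0) \<in> lattice2 0 2 0 0 1"
    by (rule lattice2_memI[where i=1 and j=0 and k=0 and l=0]) simp_all
  show "(0, 2) \<in> lattice2 0 2 0 0 1"
    by (rule lattice2_memI[where i=0 and j=2 and k=0 and l=0]) simp_all
  show "(0, 1) \<in> lattice2 2 a b c d"
    by (rule lattice2_memI[where i=1 and j=0 and k="- A" and l="- B"]) (simp_all add: AB)
qed simp_all

lemma card_quotient_lattice2_mod2_row_parity:
  assumes "odd a \<or> odd b \<or> (even c \<and> even d)"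
  shows "card (UNIV // coset_rel (lattice2 2 a b c d)) = index_mod2 a b c d"
proof (cases "even a \<and> even b \<and> even c \<and> even d")
  case True
  then show ?thesis
    by (simp add: lattice2_mod2_all_even card_quotient_triangular index_mod2_def)
next
  case not_all_even: False
  show ?thesis
  proof (cases "even (a * d - b * c)")
    case det_even: True
    show ?thesis
    proof (cases "odd a")
      case True
      then show ?thesis using det_even
        by (simp add: lattice2_mod2_a_odd card_quotient_triangular index_mod2_def)
    next
      case False
      then have "odd b \<and> even c"
        using assms not_all_even det_even
        by (cases "even b"; cases "even c"; cases "even d") (simp_all add: even_mult_iff even_diff)
      then show ?thesis using False det_even
        by (simp add: lattice2_mod2_b_odd card_quotient_triangular index_mod2_def)
    qed
  next
    case False
    then show ?thesis using not_all_even
      by (simp add: lattice2_mod2_det_odd card_quotient_triangular index_mod2_def)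
  qed
qed

lemma card_quotient_lattice2_mod2:
  "card (UNIV // coset_rel (lattice2 2 a b c d)) = index_mod2 a b c d"
proof (cases "odd a \<or> odd b \<or> (even c \<and> even d)")
  case False
  then have "card (UNIV // coset_rel (lattice2 2 c d a b)) = index_mod2 c d a b"
    by (intro card_quotient_lattice2_mod2_row_parity) auto
  moreover have "index_mod2 c d a b = index_mod2 a b c d"
    by (auto simp: index_mod2_def algebra_simps)
  ultimately show ?thesis
    by (simp add: lattice2_swap[of 2 a b])
qed (rule card_quotient_lattice2_mod2_row_parity)

definition torus_solutions :: "int \<Rightarrow> int \<Rightarrow> int \<Rightarrow> int \<Rightarrow> (complex \<times> complex) set" where
  "torus_solutions a b c d =
     {(T, U). T \<noteq> 0 \<and> U \<noteq> 0 \<and> T powi a * U powi b = 1 \<and> T powi c * U powi d = 1}"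

lemma power_int_bilinear:
  fixes T U :: "'a::field"
  assumes "T \<noteq> 0" "U \<noteq> 0"
  shows "T powi (i * a + j * c) * U powi (i * b + j * d) =
    (T powi a * U powi b) powi i * (T powi c * U powi d) powi j"
  using assms by (simp add: power_int_add power_int_mult_distrib power_int_mult mult.commute[of i]
      mult.commute[of j] ac_simps)

lemma torus_solutions_lattice2:
  assumes "(T, U) \<in> torus_solutions a b c d" "(x, y) \<in> lattice2 0 a b c d"
  shows "T powi x * U powi y = 1"
proof -
  obtain i j where "x = i * a + j * c" "y = i * b + j * d"
    using assms(2) by (auto simp: mem_lattice2)
  with assms(1) show ?thesis
    by (simp add: torus_solutions_def power_int_bilinear)
qed

lemma torus_solutions_cong:
  assumes "lattice2 0 a b c d = lattice2 0 a' b' c' d'"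
  shows "torus_solutions a b c d = torus_solutions a' b' c' d'"
proof -
  have "torus_solutions a b c d \<subseteq> torus_solutions a' b' c' d'"
    if "lattice2 0 a b c d = lattice2 0 a' b' c' d'" for a b c d a' b' c' d'
  proof (rule subrelI)
    fix T U assume TU: "(T, U) \<in> torus_solutions a b c d"
    have "(a', b') \<in> lattice2 0 a b c d" "(c', d') \<in> lattice2 0 a b c d"
      using that by simp_all
    then have "T powi a' * U powi b' = 1" "T powi c' * U powi d' = 1"
      using torus_solutions_lattice2[OF TU] by simp_all
    with TU show "(T, U) \<in> torus_solutions a' b' c' d'"
      by (simp add: torus_solutions_def)
  qed
  then show ?thesis
    using assms by (metis subset_antisym)
qed

lemma card_torus_solutions_triangular:
  assumes "g > 0" "m > 0"
  shows "card (torus_solutions g y0 0 m) = nat (g * m)"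
proof -
  define roots where "roots = {U :: complex. U ^ nat m = 1}"
  define fibre where "fibre U = {T :: complex. T ^ nat g = U powi (- y0)}" for U
  have nonzero: "U \<noteq> 0" if "U \<in> roots" for U
    using that assms(2) by (auto simp: roots_def power_0_left)
  have "torus_solutions g y0 0 m = prod.swap ` Sigma roots fibre"
  proof (intro set_eqI iffI)
    fix z assume "z \<in> torus_solutions g y0 0 m"
    then obtain T U where TU: "z = (T, U)" "U \<noteq> 0" "T powi g * U powi y0 = 1" "U powi m = 1"
      by (auto simp: torus_solutions_def)
    then have "T powi g = U powi (- y0)"
      by (simp add: power_int_minus field_simps)
    with TU assms have "(U, T) \<in> Sigma roots fibre"
      by (simp add: roots_def fibre_def power_int_def)
    then show "z \<in> prod.swap ` Sigma roots fibre"
      using TU(1) by force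
  next
    fix z assume "z \<in> prod.swap ` Sigma roots fibre"
    then obtain T U where z: "z = (T, U)" "U \<in> roots" "T ^ nat g = U powi (- y0)"
      by (auto simp: fibre_def)
    moreover have "U \<noteq> 0" "T \<noteq> 0"
      using z nonzero assms(1) by (auto simp: power_0_left)
    ultimately show "z \<in> torus_solutions g y0 0 m"
      using assms by (simp add: torus_solutions_def roots_def power_int_def power_int_minus field_simps)
  qed
  moreover have "card (fibre U) = nat g" if "U \<in> roots" for U
    using nonzero[OF that] assms(1) by (simp add: fibre_def card_nth_roots)
  moreover have "finite roots" "card roots = nat m"
    using assms(2) by (simp_all add: roots_def finite_roots_unity card_roots_unity_eq)
  ultimately show ?thesis
    using assms by (simp add: card_image card_SigmaI card_ge_0_finite nat_mult_distrib)
qed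

lemma card_torus_solutions:
  assumes "a * d - b * c \<noteq> 0"
  shows "card (torus_solutions a b c d) = nat \<bar>a * d - b * c\<bar>"
proof -
  obtain g y0 m where "g > 0" "m > 0" "g * m = \<bar>a * d - b * c\<bar>"
    "lattice2 0 a b c d = lattice2 0 g y0 0 m"
    using lattice2_hermite[OF assms] .
  then show ?thesis
    using card_torus_solutions_triangular torus_solutions_cong by metis
qed

lemma card_torus_solutions_sign:
  "card {z \<in> torus_solutions a b c d. fst z ^ 2 = 1 \<and> snd z ^ 2 = 1} = index_mod2 a b c d"
proof -
  define signs :: "(complex \<times> complex) set" where "signs = {(1, 1), (1, -1), (-1, 1), (-1, -1)}"
  define sol where "sol z \<longleftrightarrow> fst z powi a * snd z powi b = 1 \<and> fst z powi c * snd z powi d = 1"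
    for z :: "complex \<times> complex"
  have "{z \<in> torus_solutions a b c d. fst z ^ 2 = 1 \<and> snd z ^ 2 = 1} = {z \<in> signs. sol z}"
    by (auto simp: torus_solutions_def signs_def sol_def power2_eq_1_iff)
  then have "card {z \<in> torus_solutions a b c d. fst z ^ 2 = 1 \<and> snd z ^ 2 = 1} =
      (\<Sum>z\<in>signs. if sol z then 1 else 0)"
    using sum.inter_filter[of signs "\<lambda>_. 1 :: nat" sol] by (simp add: signs_def)
  also have "\<dots> = 1 + (if even b \<and> even d then 1 else 0) + (if even a \<and> even c then 1 else 0)
       + (if even (a + b) \<and> even (c + d) then 1 else 0)"
    by (simp add: signs_def sol_def power_int_minus_left)
  also have "\<dots> = index_mod2 a b c d"
    by (cases "even a"; cases "even b"; cases "even c"; cases "even d") (auto simp: index_mod2_def)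
  finally show ?thesis .
qed

lemma coprime_proportional:
  fixes p q x y :: int
  assumes "coprime p q" "p \<noteq> 0" "p * y = q * x"
  obtains t where "x = t * p" "y = t * q"
proof -
  have "p dvd q * x"
    using assms(3) by (metis dvd_triv_left)
  then obtain t where "x = t * p"
    using assms(1) by (metis coprime_dvd_mult_right_iff dvd_def mult.commute)
  moreover have "y = t * q"
    using assms(2,3) \<open>x = t * p\<close> by (simp add: algebra_simps)
  ultimately show ?thesis
    using that by blast
qed

lemma ab_vec_append [simp]: "ab_vec (xs @ ys) g = ab_vec xs g + ab_vec ys g"
  by (simp add: ab_vec_def)

lemma ab_vec_gpow [simp]: "ab_vec (gpow g' k) g = (if g' = g then k else 0)"
  by (simp add: ab_vec_def gpow_def sum_list_replicate)

lemma ab_vec_commw [simp]: "ab_vec (commw g' g'') g = 0"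
  by (simp add: ab_vec_def commw_def)

lemma mem_rel_lattice_seif_rels:
  "v \<in> rel_lattice n (seif_rels p1 q1 p2 q2 p3 q3) \<longleftrightarrow>
     (\<exists>x1 x2 x3 x4 u. v C1 = x1 * p1 + x4 + int n * u C1 \<and> v C2 = x2 * p2 + x4 + int n * u C2 \<and>
        v C3 = x3 * p3 + x4 + int n * u C3 \<and> v H = x1 * q1 + x2 * q2 + x3 * q3 + int n * u H)"
    (is "_ \<longleftrightarrow> (\<exists>x1 x2 x3 x4 u. ?eqs x1 x2 x3 x4 u)")
proof -
  let ?rels = "seif_rels p1 q1 p2 q2 p3 q3"
  have sum: "(\<Sum>i<length ?rels. c i * ab_vec (?rels ! i) g) =
      c 3 * (if g = C1 then p1 else if g = H then q1 else 0) +
      c 4 * (if g = C2 then p2 else if g = H then q2 else 0) +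
      c 5 * (if g = C3 then p3 else if g = H then q3 else 0) + c 6 * (if g = H then 0 else 1)" for c g
    by (cases g) (simp_all add: seif_rels_def eval_nat_numeral, simp_all add: ab_vec_def)
  show ?thesis
  proof
    assume "v \<in> rel_lattice n ?rels"
    then obtain c u where "v = (\<lambda>g. (\<Sum>i<length ?rels. c i * ab_vec (?rels ! i) g) + int n * u g)"
      by (auto simp: rel_lattice_def)
    then have "?eqs (c 3) (c 4) (c 5) (c 6) u"
      by (simp add: sum)
    then show "\<exists>x1 x2 x3 x4 u. ?eqs x1 x2 x3 x4 u"
      by blast
  next
    assume "\<exists>x1 x2 x3 x4 u. ?eqs x1 x2 x3 x4 u"
    then obtain x1 x2 x3 x4 u where eqs: "?eqs x1 x2 x3 x4 u"
      by blast
    define c where "c = (\<lambda>i :: nat. if i = 3 then x1 else if i = 4 then x2 else if i = 5 then x3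
      else if i = 6 then x4 else 0)"
    have "v = (\<lambda>g. (\<Sum>i<length ?rels. c i * ab_vec (?rels ! i) g) + int n * u g)"
    proof
      fix g show "v g = (\<Sum>i<length ?rels. c i * ab_vec (?rels ! i) g) + int n * u g"
        using eqs by (cases g) (simp_all add: sum c_def)
    qed
    then show "v \<in> rel_lattice n ?rels"
      unfolding rel_lattice_def by blast
  qed
qed

(* seif_proj kills the abelianised relators of c1^p1 h^q1 and c1 c2 c3 and maps those of
   c2^p2 h^q2 and c3^p3 h^q3 to (p1 q2, p2) and (p1 q3 + p3 q1, -p3); as gcd(p1, q1) = 1, it is
   onto and its kernel is spanned by the first two. *)
definition seif_proj :: "int \<Rightarrow> int \<Rightarrow> (gen \<Rightarrow> int) \<Rightarrow> int \<times> int" where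
  "seif_proj p1 q1 v = (p1 * v H - q1 * v C1 + q1 * v C3, v C2 - v C3)"

lemma seif_proj_diff: "seif_proj p1 q1 (v - w) = seif_proj p1 q1 v - seif_proj p1 q1 w"
  by (simp add: seif_proj_def algebra_simps)

lemma surj_seif_proj:
  assumes "coprime p1 q1"
  shows "surj (seif_proj p1 q1)"
proof -
  obtain a1 b1 where ab: "a1 * p1 + b1 * q1 = 1"
    using coprime_bezout_int[OF assms] .
  have "seif_proj p1 q1 (\<lambda>g. case g of C1 \<Rightarrow> - b1 * x | C2 \<Rightarrow> y | C3 \<Rightarrow> 0 | H \<Rightarrow> a1 * x) = (x, y)" for x y
  proof -
    have "p1 * (a1 * x) + q1 * (b1 * x) = (a1 * p1 + b1 * q1) * x"
      by (simp add: algebra_simps)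
    then show ?thesis
      by (simp add: seif_proj_def ab)
  qed
  then show ?thesis
    unfolding surj_def by (metis surj_pair)
qed

lemma seif_proj_mem_lattice2_iff:
  assumes "p1 \<noteq> 0" "coprime p1 q1"
  shows "seif_proj p1 q1 v \<in> lattice2 n (p1 * q2) p2 (p1 * q3 + p3 * q1) (- p3) \<longleftrightarrow>
     (\<exists>x1 x2 x3 x4 u. v C1 = x1 * p1 + x4 + n * u C1 \<and> v C2 = x2 * p2 + x4 + n * u C2 \<and>
        v C3 = x3 * p3 + x4 + n * u C3 \<and> v H = x1 * q1 + x2 * q2 + x3 * q3 + n * u H)"
    (is "_ \<longleftrightarrow> (\<exists>x1 x2 x3 x4 u. ?eqs x1 x2 x3 x4 u)")
proof
  assume "seif_proj p1 q1 v \<in> lattice2 n (p1 * q2) p2 (p1 * q3 + p3 * q1) (- p3)"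
  then obtain i j k l where
    k: "p1 * v H - q1 * v C1 + q1 * v C3 = i * (p1 * q2) + j * (p1 * q3 + p3 * q1) + n * k" and
    l: "v C2 - v C3 = i * p2 + j * - p3 + n * l"
    by (auto simp: seif_proj_def mem_lattice2)
  obtain a1 b1 where ab: "a1 * p1 + b1 * q1 = 1"
    using coprime_bezout_int[OF assms(2)] .
  define x4 where "x4 = v C3 - j * p3"
  have "p1 * (v H - i * q2 - j * q3 - n * a1 * k) - q1 * (v C1 - x4 + n * b1 * k) =
      n * k - n * k * (a1 * p1 + b1 * q1)"
    using k by (simp add: x4_def algebra_simps)
  then obtain x1 where "v C1 - x4 + n * b1 * k = x1 * p1" "v H - i * q2 - j * q3 - n * a1 * k = x1 * q1"
    using coprime_proportional[OF assms(2,1)] ab by (metis diff_eq_eq mult.right_neutral add_0)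
  then have "v C1 = x1 * p1 + x4 + n * (- b1 * k)" "v C2 = i * p2 + x4 + n * l"
      "v C3 = j * p3 + x4 + n * 0" "v H = x1 * q1 + i * q2 + j * q3 + n * (a1 * k)"
    using l by (simp_all add: x4_def algebra_simps)
  then show "\<exists>x1 x2 x3 x4 u. ?eqs x1 x2 x3 x4 u"
    by (intro exI[of _ x1] exI[of _ i] exI[of _ j] exI[of _ x4]
        exI[of _ "\<lambda>g. case g of C1 \<Rightarrow> - b1 * k | C2 \<Rightarrow> l | C3 \<Rightarrow> 0 | H \<Rightarrow> a1 * k"]) simp
next
  assume "\<exists>x1 x2 x3 x4 u. ?eqs x1 x2 x3 x4 u"
  then obtain x1 x2 x3 x4 u where "v C1 = x1 * p1 + x4 + n * u C1" "v C2 = x2 * p2 + x4 + n * u C2"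
      "v C3 = x3 * p3 + x4 + n * u C3" "v H = x1 * q1 + x2 * q2 + x3 * q3 + n * u H"
    by blast
  then show "seif_proj p1 q1 v \<in> lattice2 n (p1 * q2) p2 (p1 * q3 + p3 * q1) (- p3)"
    unfolding seif_proj_def
    by (intro lattice2_memI[where i=x2 and j=x3 and k="p1 * u H - q1 * u C1 + q1 * u C3"
          and l="u C2 - u C3"]) (simp_all add: algebra_simps)
qed

lemma rel_lattice_seif_rels_eq_vimage:
  assumes "p1 \<noteq> 0" "coprime p1 q1"
  shows "rel_lattice n (seif_rels p1 q1 p2 q2 p3 q3) =
    seif_proj p1 q1 -` lattice2 (int n) (p1 * q2) p2 (p1 * q3 + p3 * q1) (- p3)"
  unfolding set_eq_iff vimage_eq mem_rel_lattice_seif_rels seif_proj_mem_lattice2_iff[OF assms] by blast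

lemma H1_card_seif_rels:
  assumes "p1 \<noteq> 0" "coprime p1 q1"
  shows "H1_card n (seif_rels p1 q1 p2 q2 p3 q3) =
    card (UNIV // coset_rel (lattice2 (int n) (p1 * q2) p2 (p1 * q3 + p3 * q1) (- p3)))"
proof -
  have "{(v, w). v - w \<in> rel_lattice n (seif_rels p1 q1 p2 q2 p3 q3)} =
      inv_image (coset_rel (lattice2 (int n) (p1 * q2) p2 (p1 * q3 + p3 * q1) (- p3))) (seif_proj p1 q1)"
    by (auto simp: rel_lattice_seif_rels_eq_vimage[OF assms] seif_proj_diff coset_rel_def)
  then show ?thesis
    by (simp add: H1_card_def card_quotient_inv_image[OF surj_seif_proj[OF assms(2)]])
qed

lemma word_val_Nil [simp]: "word_val a [] = 1"
  by (simp add: word_val_def)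

lemma word_val_Cons_False [simp]: "word_val a ((g, False) # w) = a g * word_val a w"
  by (simp add: word_val_def)

lemma word_val_append [simp]: "word_val a (xs @ ys) = word_val a xs * word_val a ys"
  by (simp add: word_val_def)

lemma word_val_gpow [simp]: "word_val a (gpow g k) = a g powi k"
  by (simp add: word_val_def gpow_def power_int_def prod_list_replicate)

lemma word_val_commw [simp]: "a g \<noteq> 0 \<Longrightarrow> a g' \<noteq> 0 \<Longrightarrow> word_val a (commw g g') = 1"
  by (simp add: word_val_def commw_def field_simps)

lemma word_val_inverse: "word_val (inverse \<circ> a) w = inverse (word_val a w)"
  by (induction w) (auto simp: word_val_def inverse_mult_distrib mult.commute)

definition seif_homs :: "int \<Rightarrow> int \<Rightarrow> int \<Rightarrow> int \<Rightarrow> int \<Rightarrow> int \<Rightarrow> (gen \<Rightarrow> complex) set" where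
  "seif_homs p1 q1 p2 q2 p3 q3 =
     {a. (\<forall>g. a g \<noteq> 0) \<and> a C1 powi p1 * a H powi q1 = 1 \<and> a C2 powi p2 * a H powi q2 = 1 \<and>
         a C3 powi p3 * a H powi q3 = 1 \<and> a C1 * a C2 * a C3 = 1}"

lemma diag_rep_seif_rels_iff:
  "diag_rep (seif_rels p1 q1 p2 q2 p3 q3) a d \<longleftrightarrow> a \<in> seif_homs p1 q1 p2 q2 p3 q3 \<and> d = inverse \<circ> a"
proof
  assume rep: "diag_rep (seif_rels p1 q1 p2 q2 p3 q3) a d"
  then have ad: "a g * d g = 1" for g
    by (simp add: diag_rep_def)
  have "a g \<noteq> 0" for g
    using ad[of g] by auto
  with rep have "a \<in> seif_homs p1 q1 p2 q2 p3 q3"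
    by (auto simp: diag_rep_def seif_rels_def seif_homs_def mult.assoc)
  moreover have "d = inverse \<circ> a"
    using inverse_unique[OF ad] by auto
  ultimately show "a \<in> seif_homs p1 q1 p2 q2 p3 q3 \<and> d = inverse \<circ> a" ..
next
  assume "a \<in> seif_homs p1 q1 p2 q2 p3 q3 \<and> d = inverse \<circ> a"
  then show "diag_rep (seif_rels p1 q1 p2 q2 p3 q3) a d"
    by (auto simp: diag_rep_def seif_rels_def seif_homs_def word_val_inverse mult.assoc)
qed

definition diag_trace :: "(gen \<Rightarrow> complex) \<Rightarrow> word \<Rightarrow> complex" where
  "diag_trace a w = word_val a w + word_val (inverse \<circ> a) w"

lemma abelian_chars_seif_rels:
  "abelian_chars (seif_rels p1 q1 p2 q2 p3 q3) = diag_trace ` seif_homs p1 q1 p2 q2 p3 q3"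
  unfolding abelian_chars_def diag_rep_seif_rels_iff by (auto simp: diag_trace_def[abs_def])

lemma add_inverse_eq_iff:
  fixes x y :: "'a::field"
  assumes "x \<noteq> 0" "y \<noteq> 0"
  shows "x + inverse x = y + inverse y \<longleftrightarrow> y = x \<or> y = inverse x"
proof -
  have diff: "x + inverse x - (y + inverse y) = (x - y) * (x * y - 1) / (x * y)"
    using assms by (simp add: field_simps)
  have "x + inverse x = y + inverse y \<longleftrightarrow> (x - y) * (x * y - 1) = 0"
    by (simp only: eq_iff_diff_eq_0[of "x + inverse x"] diff) (simp add: assms)
  also have "\<dots> \<longleftrightarrow> y = x \<or> x * y = 1"
    by auto
  also have "\<dots> \<longleftrightarrow> y = x \<or> y = inverse x"
    using assms inverse_unique[of x y] by auto
  finally show ?thesis .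
qed

lemma diag_trace_eq_iff:
  assumes a: "\<forall>g. a g \<noteq> 0" and b: "\<forall>g. b g \<noteq> 0"
  shows "diag_trace a = diag_trace b \<longleftrightarrow> b = a \<or> b = inverse \<circ> a"
proof
  assume "b = a \<or> b = inverse \<circ> a"
  then show "diag_trace a = diag_trace b"
    by (auto simp: diag_trace_def[abs_def] word_val_inverse comp_def)
next
  assume traces: "diag_trace a = diag_trace b"
  (* one-letter words give b g \<in> {a g, 1 / a g}; two-letter words forbid mixing the choices *)
  have letter: "b g = a g \<or> b g = inverse (a g)" for g
    using fun_cong[OF traces, of "[(g, False)]"] a b
    by (simp add: diag_trace_def add_inverse_eq_iff)
  have pair: "b g * b h = a g * a h \<or> b g * b h = inverse (a g * a h)" for g h
    using fun_cong[OF traces, of "[(g, False), (h, False)]"] add_inverse_eq_iff[of "a g * a h" "b g * b h"] a b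
    by (simp add: diag_trace_def inverse_mult_distrib)
  show "b = a \<or> b = inverse \<circ> a"
  proof (rule ccontr)
    assume "\<not> (b = a \<or> b = inverse \<circ> a)"
    then obtain g h where "b g \<noteq> a g" "b h \<noteq> inverse (a h)"
      by (auto simp: fun_eq_iff)
    then have "b g = inverse (a g)" "b h = a h" "a g \<noteq> inverse (a g)" "a h \<noteq> inverse (a h)"
      using letter[of g] letter[of h] by auto
    then show False
      using pair[of g h] a by (auto simp: inverse_mult_distrib)
  qed
qed

lemma card_image_involution:
  assumes "finite X" and "\<forall>x\<in>X. s x \<in> X \<and> s (s x) = x"
    and "\<forall>x\<in>X. \<forall>y\<in>X. f x = f y \<longleftrightarrow> y = x \<or> y = s x"
  shows "2 * card (f ` X) = card X + card {x \<in> X. s x = x}"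
proof -
  let ?w = "\<lambda>x. 1 + (if s x = x then 1 else 0) :: nat"
  have fibre: "(\<Sum>x\<in>{x \<in> X. f x = y}. ?w x) = 2" if y: "y \<in> f ` X" for y
  proof -
    obtain x where x: "x \<in> X" "y = f x"
      using y by blast
    have fx: "{x' \<in> X. f x' = y} = {x, s x}"
      using x assms(2,3) by auto
    show ?thesis
    proof (cases "s x = x")
      case False
      moreover have "s (s x) = x"
        using assms(2) x(1) by blast
      ultimately show ?thesis
        by (simp add: fx)
    qed (simp add: fx)
  qed
  have "(\<Sum>x\<in>X. if s x = x then 1 else 0) = card {x \<in> X. s x = x}"
    using sum.inter_filter[OF assms(1), of "\<lambda>_. 1 :: nat" "\<lambda>x. s x = x"] by simp
  then have "card X + card {x \<in> X. s x = x} = (\<Sum>x\<in>X. ?w x)"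
    unfolding sum.distrib by simp
  also have "\<dots> = (\<Sum>y\<in>f ` X. \<Sum>x\<in>{x \<in> X. f x = y}. ?w x)"
    by (rule sum.image_gen[OF assms(1)])
  also have "\<dots> = 2 * card (f ` X)"
    using fibre by simp
  finally show ?thesis ..
qed

lemma card_abelian_chars_seif_homs:
  assumes "finite (seif_homs p1 q1 p2 q2 p3 q3)"
  shows "2 * card (abelian_chars (seif_rels p1 q1 p2 q2 p3 q3)) =
    card (seif_homs p1 q1 p2 q2 p3 q3) + card {a \<in> seif_homs p1 q1 p2 q2 p3 q3. \<forall>g. a g ^ 2 = 1}"
proof -
  let ?X = "seif_homs p1 q1 p2 q2 p3 q3"
  have "inverse \<circ> a \<in> ?X" if "a \<in> ?X" for a
    using that by (simp add: seif_homs_def power_int_inverse flip: inverse_mult_distrib)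
  then have "2 * card (diag_trace ` ?X) = card ?X + card {a \<in> ?X. inverse \<circ> a = a}"
    by (intro card_image_involution[OF assms]) (auto simp: diag_trace_eq_iff seif_homs_def)
  moreover have "inverse \<circ> a = a \<longleftrightarrow> (\<forall>g. a g ^ 2 = 1)" if "a \<in> ?X" for a
    using that by (auto simp: seif_homs_def fun_eq_iff power2_eq_square field_simps)
  then have "{a \<in> ?X. inverse \<circ> a = a} = {a \<in> ?X. \<forall>g. a g ^ 2 = 1}"
    by blast
  ultimately show ?thesis
    by (simp add: abelian_chars_seif_rels)
qed

lemma power_int_bezout:
  fixes T :: "'a::field"
  assumes "T \<noteq> 0" "a1 * p + b1 * q = 1"
  shows "(T powi p) powi a1 * (T powi (- q)) powi (- b1) = T"
proof -
  have "(T powi p) powi a1 * (T powi (- q)) powi (- b1) = T powi (a1 * p) * T powi (b1 * q)"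
    by (simp add: mult.commute flip: power_int_mult)
  also have "\<dots> = T powi (a1 * p + b1 * q)"
    using assms(1) by (simp add: power_int_add)
  finally show ?thesis
    using assms(2) by simp
qed

lemma bezout_common_root:
  fixes x h :: "'a::field"
  assumes "x \<noteq> 0" "h \<noteq> 0" "x powi p * h powi q = 1" "a1 * p + b1 * q = 1"
  shows "(h powi a1 * x powi (- b1)) powi p = h" "(h powi a1 * x powi (- b1)) powi (- q) = x"
proof -
  have xp: "x powi p = h powi (- q)"
    using assms(2,3) by (simp add: power_int_minus field_simps)
  have "(h powi a1 * x powi (- b1)) powi p = h powi (a1 * p) * (x powi p) powi (- b1)"
    by (simp add: power_int_mult_distrib mult.commute flip: power_int_mult)
  also have "\<dots> = h powi (a1 * p + b1 * q)"
    using assms(2) by (simp add: xp power_int_add mult.commute flip: power_int_mult)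
  finally show "(h powi a1 * x powi (- b1)) powi p = h"
    using assms(4) by simp
  have "(h powi a1 * x powi (- b1)) powi (- q) = (h powi (- q)) powi a1 * x powi (b1 * q)"
    by (simp add: power_int_mult_distrib mult.commute flip: power_int_mult)
  also have "\<dots> = x powi (a1 * p + b1 * q)"
    using assms(1) by (simp add: xp[symmetric] power_int_add mult.commute flip: power_int_mult)
  finally show "(h powi a1 * x powi (- b1)) powi (- q) = x"
    using assms(4) by simp
qed

definition seif_hom_of :: "int \<Rightarrow> int \<Rightarrow> complex \<times> complex \<Rightarrow> gen \<Rightarrow> complex" where
  "seif_hom_of p1 q1 z g = (case g of
     C1 \<Rightarrow> fst z powi (- q1) | C2 \<Rightarrow> snd z | C3 \<Rightarrow> fst z powi q1 / snd z | H \<Rightarrow> fst z powi p1)"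

lemma seif_hom_of_mem_iff:
  assumes "T \<noteq> 0" "U \<noteq> 0"
  shows "seif_hom_of p1 q1 (T, U) \<in> seif_homs p1 q1 p2 q2 p3 q3 \<longleftrightarrow>
    (T, U) \<in> torus_solutions (p1 * q2) p2 (p1 * q3 + p3 * q1) (- p3)"
proof -
  have nonzero: "\<forall>g. seif_hom_of p1 q1 (T, U) g \<noteq> 0"
    using assms by (simp add: seif_hom_of_def split: gen.split)
  have "(T powi (- q1)) powi p1 * (T powi p1) powi q1 = 1"
    using assms(1) by (simp add: mult.commute flip: power_int_mult power_int_add)
  moreover have "U powi p2 * (T powi p1) powi q2 = T powi (p1 * q2) * U powi p2"
    by (simp add: mult.commute flip: power_int_mult)
  moreover have "(T powi q1 / U) powi p3 * (T powi p1) powi q3 = T powi (p1 * q3 + p3 * q1) * U powi (- p3)"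
    using assms by (simp add: power_int_divide_distrib power_int_add power_int_minus mult.commute
        field_simps flip: power_int_mult)
  moreover have "T powi (- q1) * U * (T powi q1 / U) = 1"
    using assms by (simp add: power_int_minus field_simps)
  ultimately show ?thesis
    unfolding seif_homs_def torus_solutions_def mem_Collect_eq prod.case
    using nonzero assms by (simp add: seif_hom_of_def mult.commute)
qed

lemma bij_betw_seif_hom_of:
  assumes "coprime p1 q1"
  shows "bij_betw (seif_hom_of p1 q1) (torus_solutions (p1 * q2) p2 (p1 * q3 + p3 * q1) (- p3))
    (seif_homs p1 q1 p2 q2 p3 q3)"
proof -
  let ?Y = "torus_solutions (p1 * q2) p2 (p1 * q3 + p3 * q1) (- p3)"
  let ?X = "seif_homs p1 q1 p2 q2 p3 q3"
  obtain a1 b1 where ab: "a1 * p1 + b1 * q1 = 1"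
    using coprime_bezout_int[OF assms] .
  define root where "root a = (a H powi a1 * a C1 powi (- b1), a C2)" for a :: "gen \<Rightarrow> complex"
  have root_of: "root (seif_hom_of p1 q1 z) = z" if "z \<in> ?Y" for z
    using that power_int_bezout[OF _ ab] by (auto simp: root_def seif_hom_of_def torus_solutions_def)
  have of_root: "seif_hom_of p1 q1 (root a) = a \<and> root a \<in> ?Y" if a: "a \<in> ?X" for a
  proof -
    have nonzero: "a g \<noteq> 0" for g
      using a by (simp add: seif_homs_def)
    obtain T where T: "root a = (T, a C2)"
      by (simp add: root_def)
    have "T powi p1 = a H" "T powi (- q1) = a C1"
      using bezout_common_root[of "a C1" "a H" p1 q1 a1 b1] nonzero a ab T
      by (simp_all add: root_def seif_homs_def)
    moreover from this(2) have "T powi q1 = inverse (a C1)"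
      by (metis inverse_inverse_eq power_int_minus)
    moreover have "a C3 = inverse (a C1) / a C2"
      using a nonzero by (simp add: seif_homs_def field_simps)
    ultimately have "seif_hom_of p1 q1 (root a) g = a g" for g
      by (cases g) (simp_all add: T seif_hom_of_def power_int_minus)
    then have "seif_hom_of p1 q1 (root a) = a" ..
    moreover have "fst (root a) \<noteq> 0" "snd (root a) \<noteq> 0"
      using nonzero by (simp_all add: root_def)
    ultimately show ?thesis
      using seif_hom_of_mem_iff[of "fst (root a)" "snd (root a)" p1 q1 p2 q2 p3 q3] a by simp
  qed
  show ?thesis
  proof (rule bij_betw_byWitness[where f'=root])
    show "seif_hom_of p1 q1 ` ?Y \<subseteq> ?X"
      using seif_hom_of_mem_iff by (auto simp: torus_solutions_def)
  qed (use root_of of_root in auto)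
qed

lemma power_int_square_eq_1:
  fixes x :: "'a::field"
  assumes "x ^ 2 = 1"
  shows "(x powi k) ^ 2 = 1"
  using assms by (simp add: power2_eq_square flip: power_int_mult_distrib)

lemma bij_betw_seif_hom_of_sign:
  assumes "coprime p1 q1"
  shows "bij_betw (seif_hom_of p1 q1)
    {z \<in> torus_solutions (p1 * q2) p2 (p1 * q3 + p3 * q1) (- p3). fst z ^ 2 = 1 \<and> snd z ^ 2 = 1}
    {a \<in> seif_homs p1 q1 p2 q2 p3 q3. \<forall>g. a g ^ 2 = 1}"
proof (rule bij_betw_Collect[OF bij_betw_seif_hom_of[OF assms]])
  fix z assume "z \<in> torus_solutions (p1 * q2) p2 (p1 * q3 + p3 * q1) (- p3)"
  then obtain T U where z: "z = (T, U)" "T \<noteq> 0"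
    by (auto simp: torus_solutions_def)
  obtain a1 b1 where ab: "a1 * p1 + b1 * q1 = 1"
    using coprime_bezout_int[OF assms] .
  show "(\<forall>g. seif_hom_of p1 q1 z g ^ 2 = 1) \<longleftrightarrow> fst z ^ 2 = 1 \<and> snd z ^ 2 = 1"
  proof
    assume sq: "\<forall>g. seif_hom_of p1 q1 z g ^ 2 = 1"
    have "(T powi p1) ^ 2 = 1" "(T powi (- q1)) ^ 2 = 1" "U ^ 2 = 1"
      using sq[rule_format, of H] sq[rule_format, of C1] sq[rule_format, of C2]
      by (simp_all add: seif_hom_of_def z)
    then have "((T powi p1) powi a1 * (T powi (- q1)) powi (- b1)) ^ 2 = 1" "U ^ 2 = 1"
      by (simp_all add: power_mult_distrib power_int_square_eq_1)
    then show "fst z ^ 2 = 1 \<and> snd z ^ 2 = 1"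
      by (simp add: z power_int_bezout[OF z(2) ab])
  next
    assume "fst z ^ 2 = 1 \<and> snd z ^ 2 = 1"
    then show "\<forall>g. seif_hom_of p1 q1 z g ^ 2 = 1"
      by (auto simp: seif_hom_of_def z power_int_square_eq_1 power_divide split: gen.split)
  qed
qed

lemma seif_matrix_det:
  fixes p1 q1 p2 q2 p3 q3 :: int
  shows "(p1 * q2) * (- p3) - p2 * (p1 * q3 + p3 * q1) = - (p1 * p2 * q3 + p1 * q2 * p3 + q1 * p2 * p3)"
  by (simp add: algebra_simps)

lemma card_abelian_chars_seif_rels:
  assumes "coprime p1 q1" and "p1 * p2 * q3 + p1 * q2 * p3 + q1 * p2 * p3 \<noteq> 0"
  shows "2 * card (abelian_chars (seif_rels p1 q1 p2 q2 p3 q3)) =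
    nat \<bar>p1 * p2 * q3 + p1 * q2 * p3 + q1 * p2 * p3\<bar> + index_mod2 (p1 * q2) p2 (p1 * q3 + p3 * q1) (- p3)"
proof -
  let ?Y = "torus_solutions (p1 * q2) p2 (p1 * q3 + p3 * q1) (- p3)"
  have card_Y: "card ?Y = nat \<bar>p1 * p2 * q3 + p1 * q2 * p3 + q1 * p2 * p3\<bar>"
    using card_torus_solutions[of "p1 * q2" "- p3" p2 "p1 * q3 + p3 * q1", unfolded seif_matrix_det] assms(2)
    by simp
  then have "finite ?Y"
    using assms(2) by (intro card_ge_0_finite) simp
  then show ?thesis
    using card_abelian_chars_seif_homs[of p1 q1 p2 q2 p3 q3] card_Y card_torus_solutions_sign
      bij_betw_finite[OF bij_betw_seif_hom_of[OF assms(1)]]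
      bij_betw_same_card[OF bij_betw_seif_hom_of[OF assms(1)]]
      bij_betw_same_card[OF bij_betw_seif_hom_of_sign[OF assms(1)]]
    by simp
qed

lemma H1_card_seif_rels_int:
  assumes "p1 \<noteq> 0" "coprime p1 q1" and "p1 * p2 * q3 + p1 * q2 * p3 + q1 * p2 * p3 \<noteq> 0"
  shows "H1_card 0 (seif_rels p1 q1 p2 q2 p3 q3) = nat \<bar>p1 * p2 * q3 + p1 * q2 * p3 + q1 * p2 * p3\<bar>"
  using H1_card_seif_rels[OF assms(1,2), of 0] assms(3)
    card_quotient_lattice2[of "p1 * q2" "- p3" p2 "p1 * q3 + p3 * q1", unfolded seif_matrix_det]
  by simp

lemma H1_card_seif_rels_mod2:
  assumes "p1 \<noteq> 0" "coprime p1 q1"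
  shows "H1_card 2 (seif_rels p1 q1 p2 q2 p3 q3) = index_mod2 (p1 * q2) p2 (p1 * q3 + p3 * q1) (- p3)"
  using H1_card_seif_rels[OF assms, of 2] by (simp add: card_quotient_lattice2_mod2)

lemma index_mod2_seif:
  assumes "coprime p2 q2"
  shows "index_mod2 (p1 * q2) p2 (p1 * q3 + p3 * q1) (- p3) =
    (if 2 dvd p1 \<and> 2 dvd p2 \<and> 2 dvd p3 then 4
     else if 2 dvd \<bar>p1 * p2 * q3 + p1 * q2 * p3 + q1 * p2 * p3\<bar> then 2 else 1)"
proof -
  have "\<not> (even p2 \<and> even q2)"
    using coprime_common_divisor[OF assms, of 2] by auto
  then have "even (p1 * q2) \<and> even p2 \<and> even (p1 * q3 + p3 * q1) \<and> even (- p3) \<longleftrightarrow>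
      even p1 \<and> even p2 \<and> even p3"
    by (auto simp: even_mult_iff)
  then show ?thesis
    by (simp only: index_mod2_def seif_matrix_det even_minus dvd_abs_iff)
qed

theorem lemma5p2:
  fixes p1 p2 p3 q1 q2 q3 :: int
  assumes "p1 \<ge> 1" and "p2 \<ge> 1" and "p3 \<ge> 1"
    and "coprime p1 q1" and "coprime p2 q2" and "coprime p3 q3"
    and "of_int q1 / of_int p1 + of_int q2 / of_int p2 + of_int q3 / of_int p3 \<noteq> (0::real)"
  defines "R \<equiv> seif_rels p1 q1 p2 q2 p3 q3"
    and "e \<equiv> of_int q1 / of_int p1 + of_int q2 / of_int p2 + of_int q3 / of_int p3 :: real"
  shows "real (card (abelian_chars R)) = (real (H1_card 0 R) + real (H1_card 2 R)) / 2
    \<and> int (H1_card 0 R) = \<bar>p1 * p2 * q3 + p1 * q2 * p3 + q1 * p2 * p3\<bar>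
    \<and> real (H1_card 0 R) = real_of_int (p1 * p2 * p3) * \<bar>e\<bar>
    \<and> H1_card 2 R =
           (if 2 dvd p1 \<and> 2 dvd p2 \<and> 2 dvd p3 then 4
            else if 2 dvd \<bar>p1 * p2 * q3 + p1 * q2 * p3 + q1 * p2 * p3\<bar> then 2
            else 1)"
proof -
  let ?D = "p1 * p2 * q3 + p1 * q2 * p3 + q1 * p2 * p3"
  have p1: "p1 \<noteq> 0"
    using assms(1) by simp
  have De: "real_of_int ?D = real_of_int (p1 * p2 * p3) * e"
    using assms(1-3) by (simp add: e_def field_simps)
  have "e \<noteq> 0"
    using assms(7) by (simp add: e_def)
  then have "real_of_int ?D \<noteq> 0"
    unfolding De using assms(1-3) by simp
  then have "?D \<noteq> 0"
    by (metis of_int_0)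
  have H0: "H1_card 0 R = nat \<bar>?D\<bar>"
    unfolding R_def by (rule H1_card_seif_rels_int[OF p1 assms(4) \<open>?D \<noteq> 0\<close>])
  have H2: "H1_card 2 R = (if 2 dvd p1 \<and> 2 dvd p2 \<and> 2 dvd p3 then 4 else if 2 dvd \<bar>?D\<bar> then 2 else 1)"
    unfolding R_def H1_card_seif_rels_mod2[OF p1 assms(4)] by (rule index_mod2_seif[OF assms(5)])
  have "real (H1_card 0 R) = \<bar>real_of_int ?D\<bar>"
    by (simp add: H0)
  then have H0_real: "real (H1_card 0 R) = real_of_int (p1 * p2 * p3) * \<bar>e\<bar>"
    unfolding De using assms(1-3) by (simp add: abs_mult)
  have "2 * card (abelian_chars R) = H1_card 0 R + H1_card 2 R"
    unfolding R_def H1_card_seif_rels_mod2[OF p1 assms(4)] H0[unfolded R_def]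
    by (rule card_abelian_chars_seif_rels[OF assms(4) \<open>?D \<noteq> 0\<close>])
  then have "real (2 * card (abelian_chars R)) = real (H1_card 0 R + H1_card 2 R)"
    by (simp only:)
  then show ?thesis
    using H0 H2 H0_real by simp
qed

end
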